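(* Let $F$ be an infinite field, $R$ a finite-dimensional associative unital $F$-algebra and $J$ its Jacobson radical. Then the multiplicative polynomial functions $f:R\to F$ are induced by the polynomial characters of the unit group $(R/J)^\star$: every such $f$ restricted to $R^\star$ is a character of $R^\star$ that is trivial on $1+J$, hence factors through a polynomial character of $(R/J)^\star=R^\star/(1+J)$, and $f$ is determined by this character.
   Context: A polynomial function $f:R\to F$ is multiplicative if $f(ab)=f(a)f(b)$ for all $a,b\in R$. $R^\star$ denotes the group of invertible elements of $R$; a character of an algebraic group is an algebraic group homomorphism to $F^\star$, and a polynomial character of $(R/J)^\star$ is one given by (the restriction of) a polynomial function on $R/J$. *)

theory Defs
  imports Complex_Main
begin

definition is_algebra :: "('f::field \<Rightarrow> 'r::ring_1 \<Rightarrow> 'r) \<Rightarrow> bool" where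
  "is_algebra scale \<longleftrightarrow> Vector_Spaces.vector_space scale \<and>
     (\<forall>c x y. scale c (x * y) = scale c x * y \<and> scale c (x * y) = x * scale c y)"

definition fin_dim_algebra :: "('f::field \<Rightarrow> 'r::ring_1 \<Rightarrow> 'r) \<Rightarrow> bool" where
  "fin_dim_algebra scale \<longleftrightarrow> is_algebra scale \<and>
     (\<exists>B. finite B \<and> module.span scale B = UNIV)"

text \<open>Polynomial functions R \<rightarrow> F: the F-algebra of functions generated by
the constants and the F-linear functionals on R (coordinate-free version of
"polynomial in the coordinates with respect to a basis").\<close>
inductive_set polyfun :: "('f::field \<Rightarrow> 'r::ring_1 \<Rightarrow> 'r) \<Rightarrow> ('r \<Rightarrow> 'f) set"
  for scale :: "'f::field \<Rightarrow> 'r::ring_1 \<Rightarrow> 'r" where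
  const: "(\<lambda>_. c) \<in> polyfun scale"
| lin: "Vector_Spaces.linear scale (*) \<phi> \<Longrightarrow> \<phi> \<in> polyfun scale"
| add: "p \<in> polyfun scale \<Longrightarrow> q \<in> polyfun scale \<Longrightarrow> (\<lambda>x. p x + q x) \<in> polyfun scale"
| mult: "p \<in> polyfun scale \<Longrightarrow> q \<in> polyfun scale \<Longrightarrow> (\<lambda>x. p x * q x) \<in> polyfun scale"

definition multiplicative :: "('r::ring_1 \<Rightarrow> 'f::field) \<Rightarrow> bool" where
  "multiplicative f \<longleftrightarrow> (\<forall>a b. f (a * b) = f a * f b)"

definition ring_units :: "'r::ring_1 set" where
  "ring_units = {u. \<exists>v. u * v = 1 \<and> v * u = 1}"

definition left_ideal :: "'r::ring_1 set \<Rightarrow> bool" where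
  "left_ideal I \<longleftrightarrow> 0 \<in> I \<and> (\<forall>x\<in>I. \<forall>y\<in>I. x + y \<in> I) \<and> (\<forall>x\<in>I. - x \<in> I)
     \<and> (\<forall>r. \<forall>x\<in>I. r * x \<in> I)"

definition maximal_left_ideal :: "'r::ring_1 set \<Rightarrow> bool" where
  "maximal_left_ideal I \<longleftrightarrow> left_ideal I \<and> I \<noteq> UNIV \<and>
     (\<forall>K. left_ideal K \<and> I \<subseteq> K \<and> K \<noteq> UNIV \<longrightarrow> K = I)"

definition jacobson :: "'r::ring_1 set" where
  "jacobson = \<Inter>{I. maximal_left_ideal I}"

end

theory Submission
  imports Defs "HOL-Computational_Algebra.Polynomial"
begin

text \<open>
First, the radical J is nil: the left ideals R j^k form a descending chain of subspaces, so
j^k = r j^(k+1) for some k and r, and since 1 - r j is left invertible, j^k = 0.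
Second, for every x only finitely many s make x + s 1 a non-unit, because -s is then an
eigenvalue of left multiplication by x, and these eigenvalues are roots of a nonzero polynomial.
Restricted to the line s \<mapsto> x + s 1, a polynomial function is a polynomial in s, so over an
infinite field two polynomial functions that agree on the units agree everywhere.

For multiplicative f and x with x^(2^(n+1)) = 0, the polynomial h(s) = f(1 + s x) satisfies
h(s) h(-s) = f(1 - s^2 x^2) = 1 by induction on n, so h is constant and f(1 + x) = f(1) = 1.
Hence f(u + j) = f(u) f(1 + u^-1 j) = f(u) for units u and j in J, and by density
f(x + j) = f(x) for all x: f itself is the required character of the units modulo 1 + J.
\<close>

context finite_dimensional_vector_space
begin

lemma decreasing_subspaces_stabilize:
  assumes "\<And>k. subspace (W k)" and "\<And>k. W (Suc k) \<subseteq> W k"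
  shows "\<exists>k. W (Suc k) = W k"
proof (rule ccontr)
  assume "\<nexists>k. W (Suc k) = W k"
  then have "span (W (Suc k)) \<subset> span (W k)" for k
    using assms by (metis span_eq_iff psubset_eq)
  then have shrink: "dim (W (Suc k)) < dim (W k)" for k
    by (rule dim_psubset)
  have "dim (W k) + k \<le> dim (W 0)" for k
  proof (induction k)
    case (Suc k)
    then show ?case
      using shrink[of k] by linarith
  qed simp
  then show False
    using dim_subset_UNIV[of "W 0"] by (metis add_leD2 not_less_eq_eq)
qed

lemma ex_in_span_predecessors:
  fixes v :: "nat \<Rightarrow> 'b"
  shows "\<exists>k. v k \<in> span (v ` {..<k})"
proof (rule ccontr)
  assume none: "\<nexists>k. v k \<in> span (v ` {..<k})"
  have "span (v ` {..<k}) \<subset> span (v ` {..<Suc k})" for k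
  proof -
    have "span (v ` {..<k}) \<subseteq> span (v ` {..<Suc k})"
      by (rule span_mono) auto
    moreover have "v k \<in> span (v ` {..<Suc k})"
      by (rule span_base) simp
    ultimately show ?thesis
      using none by blast
  qed
  then have grow: "dim (v ` {..<k}) < dim (v ` {..<Suc k})" for k
    by (rule dim_psubset)
  have "k \<le> dim (v ` {..<k})" for k
  proof (induction k)
    case (Suc k)
    then show ?case
      using grow[of k] by linarith
  qed simp
  then show False
    using dim_subset_UNIV[of "v ` {..<Suc dimension}"] by (metis le_trans not_less_eq_eq)
qed

end

locale finite_dimensional_algebra = finite_dimensional_vector_space scale Basis
  for scale :: "'f::field \<Rightarrow> 'r::ring_1 \<Rightarrow> 'r" and Basis :: "'r set" +
  assumes scale_mult_left: "scale c (x * y) = scale c x * y"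
    and scale_mult_right: "scale c (x * y) = x * scale c y"

lemma fin_dim_algebra_obtains_basis:
  fixes scale :: "'f::field \<Rightarrow> 'r::ring_1 \<Rightarrow> 'r"
  assumes "fin_dim_algebra scale"
  obtains Basis where "finite_dimensional_algebra scale Basis"
proof -
  interpret vector_space scale
    using assms by (simp add: fin_dim_algebra_def is_algebra_def)
  obtain B where B: "finite B" "span B = UNIV"
    using assms by (auto simp: fin_dim_algebra_def)
  obtain B' where B': "B' \<subseteq> B" "independent B'" "B \<subseteq> span B'"
    using maximal_independent_subset by blast
  have "UNIV \<subseteq> span B'"
    using B' span_mono span_span B(2) by metis
  then have "finite_dimensional_vector_space scale B'"
    by unfold_locales (use B B' finite_subset in auto)
  moreover have "scale c (x * y) = scale c x * y" "scale c (x * y) = x * scale c y" for c x y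
    using assms unfolding fin_dim_algebra_def is_algebra_def by blast+
  ultimately show ?thesis
    by (intro that) (simp add: finite_dimensional_algebra_def finite_dimensional_algebra_axioms_def)
qed

lemma left_ideal_UNIV_if_one: "left_ideal I \<Longrightarrow> 1 \<in> I \<Longrightarrow> I = UNIV"
  unfolding left_ideal_def by (metis UNIV_eq_I mult_1_right)

lemma left_ideal_range_mult_right: "left_ideal (range (\<lambda>r. r * a))"
proof -
  have "0 \<in> range (\<lambda>r. r * a)"
    by (metis mult_zero_left rangeI)
  moreover have "r * a + s * a \<in> range (\<lambda>r. r * a)" for r s
    by (metis distrib_right rangeI)
  moreover have "- (r * a) \<in> range (\<lambda>r. r * a)" for r
    by (metis minus_mult_left rangeI)
  moreover have "s * (r * a) \<in> range (\<lambda>r. r * a)" for r s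
    by (metis mult.assoc rangeI)
  ultimately show ?thesis
    unfolding left_ideal_def by blast
qed

lemma jacobson_mult_left: "j \<in> jacobson \<Longrightarrow> r * j \<in> jacobson"
  unfolding jacobson_def maximal_left_ideal_def left_ideal_def by auto

context finite_dimensional_algebra
begin

lemma scale_eq_mult: "scale c x = scale c 1 * x"
  by (metis mult_1_left scale_mult_left)

lemma power_scale: "scale s x ^ k = scale (s ^ k) (x ^ k)"
  by (induction k) (simp_all, metis scale_mult_left scale_mult_right scale_scale)

lemma left_ideal_subspace: "left_ideal I \<Longrightarrow> subspace I"
  unfolding left_ideal_def subspace_def by (metis scale_eq_mult)

lemma unit_if_mult_left_inj:
  fixes u :: 'r
  assumes "\<And>y. u * y = 0 \<Longrightarrow> y = 0"
  shows "u \<in> ring_units"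
proof -
  have surj_mult_left: "surj ((*) a)" if "inj ((*) a)" for a :: 'r
    by (rule linear_inj_imp_surj[OF _ that]) (unfold_locales, auto simp: algebra_simps scale_mult_right)
  have "inj ((*) u)"
    by (rule injI) (metis assms eq_iff_diff_eq_0 right_diff_distrib)
  then obtain w where w: "u * w = 1"
    using surj_mult_left by (metis surjD)
  have "inj ((*) w)"
  proof (rule injI)
    fix a b
    assume "w * a = w * b"
    then have "(u * w) * a = (u * w) * b"
      by (simp add: mult.assoc)
    then show "a = b"
      using w by simp
  qed
  then obtain z where z: "w * z = 1"
    using surj_mult_left by (metis surjD)
  have "u = (u * w) * z"
    using z by (simp add: mult.assoc)
  then have "w * u = 1"
    using w z by simp
  with w show ?thesis
    unfolding ring_units_def by blast
qed

lemma ex_maximal_left_ideal: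
  fixes L :: "'r set"
  assumes "left_ideal L" and "L \<noteq> UNIV"
  shows "\<exists>M. maximal_left_ideal M \<and> L \<subseteq> M"
proof -
  define D where "D = {dim K | K. left_ideal K \<and> L \<subseteq> K \<and> K \<noteq> UNIV}"
  define m where "m = Max D"
  have "finite D"
    by (rule finite_subset[of _ "{..dimension}"]) (auto simp: D_def dim_subset_UNIV)
  moreover have "D \<noteq> {}"
    using assms unfolding D_def by blast
  ultimately have "m \<in> D"
    unfolding m_def by (rule Max_in)
  then obtain M where M: "left_ideal M" "L \<subseteq> M" "M \<noteq> UNIV" "dim M = m"
    unfolding D_def by blast
  have "K = M" if "left_ideal K" "M \<subseteq> K" "K \<noteq> UNIV" for K
  proof -
    have "dim K \<in> D"
      using that M unfolding D_def by blast
    then have "dim K \<le> dim M"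
      using \<open>finite D\<close> M(4) unfolding m_def by simp
    then show ?thesis
      using subspace_dim_equal[of M K] that M left_ideal_subspace by auto
  qed
  with M show ?thesis
    unfolding maximal_left_ideal_def by blast
qed

lemma jacobson_one_plus_left_invertible:
  fixes j :: 'r
  assumes "j \<in> jacobson"
  shows "\<exists>w. w * (1 + j) = 1"
proof (rule ccontr)
  assume "\<nexists>w. w * (1 + j) = 1"
  then have "1 \<notin> range (\<lambda>r. r * (1 + j))"
    by (metis rangeE)
  then have "range (\<lambda>r. r * (1 + j)) \<noteq> UNIV"
    by blast
  then obtain M where M: "maximal_left_ideal M" "range (\<lambda>r. r * (1 + j)) \<subseteq> M"
    using ex_maximal_left_ideal[OF left_ideal_range_mult_right[of "1 + j"]] by blast
  then have "left_ideal M" "M \<noteq> UNIV"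
    unfolding maximal_left_ideal_def by auto
  have "1 * (1 + j) \<in> M"
    using M(2) by blast
  then have "1 + j \<in> M"
    by simp
  moreover have "j \<in> M"
    using assms M(1) unfolding jacobson_def by blast
  ultimately have "(1 + j) + - j \<in> M"
    using \<open>left_ideal M\<close> unfolding left_ideal_def by blast
  then have "1 \<in> M"
    by simp
  then show False
    using \<open>left_ideal M\<close> \<open>M \<noteq> UNIV\<close> left_ideal_UNIV_if_one by blast
qed

lemma jacobson_nilpotent:
  fixes j :: 'r
  assumes "j \<in> jacobson"
  shows "\<exists>k. j ^ k = 0"
proof -
  define W where "W k = range (\<lambda>r. r * j ^ k)" for k
  have "subspace (W k)" for k
    unfolding W_def by (rule left_ideal_subspace[OF left_ideal_range_mult_right])
  moreover have "W (Suc k) \<subseteq> W k" for k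
  proof -
    have "r * j ^ Suc k = (r * j) * j ^ k" for r
      by (simp add: mult.assoc)
    then show ?thesis
      unfolding W_def by (metis image_subsetI rangeI)
  qed
  ultimately obtain k where "W (Suc k) = W k"
    using decreasing_subspaces_stabilize by blast
  moreover have "j ^ k \<in> W k"
    unfolding W_def by (metis mult_1_left rangeI)
  ultimately obtain r where r: "j ^ k = r * j ^ Suc k"
    unfolding W_def by blast
  obtain w where w: "w * (1 + (- r) * j) = 1"
    using jacobson_one_plus_left_invertible jacobson_mult_left assms by blast
  have "(1 + (- r) * j) * j ^ k = 0"
    using r by (simp add: algebra_simps)
  then have "j ^ k = 0"
    using w by (metis mult.assoc mult_1_left mult_zero_right)
  then show ?thesis
    by blast
qed

lemma power_mult_eigenvector:
  assumes "x * y = scale l y"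
  shows "x ^ i * y = scale (l ^ i) y"
proof (induction i)
  case (Suc i)
  have "x ^ Suc i * y = x * (x ^ i * y)"
    by (simp add: mult.assoc)
  also have "\<dots> = scale (l ^ i) (x * y)"
    using Suc by (simp add: scale_mult_right)
  also have "\<dots> = scale (l ^ Suc i) y"
    using assms by (simp add: mult.commute)
  finally show ?case .
qed simp

lemma span_powers_act_on_eigenvectors:
  fixes x :: 'r
  assumes "v \<in> span ((\<lambda>i. x ^ i) ` {..<k})"
  shows "\<exists>P. coeff P k = 0 \<and> (\<forall>y l. x * y = scale l y \<longrightarrow> v * y = scale (poly P l) y)"
  using assms
proof (induction rule: span_induct_alt)
  case base
  show ?case
    by (rule exI[of _ 0]) simp
next
  case (step c z w)
  then obtain i where i: "i < k" "z = x ^ i"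
    by blast
  from step obtain P where P: "coeff P k = 0"
    "\<forall>y l. x * y = scale l y \<longrightarrow> w * y = scale (poly P l) y"
    by blast
  have "(scale c z + w) * y = scale (poly (monom c i + P) l) y" if "x * y = scale l y" for y l
  proof -
    have "(scale c z + w) * y = scale c (z * y) + w * y"
      by (simp add: distrib_right scale_mult_left)
    also have "\<dots> = scale c (scale (l ^ i) y) + scale (poly P l) y"
      using power_mult_eigenvector[OF that, of i] P that i by simp
    also have "\<dots> = scale (poly (monom c i + P) l) y"
      by (simp add: poly_monom scale_left_distrib)
    finally show ?thesis .
  qed
  moreover have "coeff (monom c i + P) k = 0"
    using P i by (simp add: coeff_monom)
  ultimately show ?case
    by blast
qed

lemma finite_eigenvalues:
  fixes x :: 'r
  shows "finite {l. \<exists>y. y \<noteq> 0 \<and> x * y = scale l y}"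
proof -
  obtain k where "x ^ k \<in> span ((\<lambda>i. x ^ i) ` {..<k})"
    using ex_in_span_predecessors by blast
  then obtain P where P: "coeff P k = 0"
    "\<And>y l. x * y = scale l y \<Longrightarrow> x ^ k * y = scale (poly P l) y"
    using span_powers_act_on_eigenvectors by blast
  define Q where "Q = monom 1 k - P"
  have "coeff Q k = 1"
    using P(1) by (simp add: Q_def coeff_monom)
  then have "Q \<noteq> 0"
    by auto
  have "poly Q l = 0" if "y \<noteq> 0" "x * y = scale l y" for y l
  proof -
    have "scale (l ^ k) y = scale (poly P l) y"
      using power_mult_eigenvector[OF that(2)] P(2)[OF that(2)] by metis
    then have "scale (l ^ k - poly P l) y = 0"
      by (simp add: scale_left_diff_distrib)
    then show ?thesis
      using that(1) by (simp add: Q_def poly_monom)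
  qed
  then have "{l. \<exists>y. y \<noteq> 0 \<and> x * y = scale l y} \<subseteq> {l. poly Q l = 0}"
    by blast
  then show ?thesis
    using poly_roots_finite[OF \<open>Q \<noteq> 0\<close>] by (rule finite_subset)
qed

lemma finite_non_units_on_line:
  fixes x :: 'r
  shows "finite {s. x + scale s 1 \<notin> ring_units}"
proof -
  have "s \<in> uminus ` {l. \<exists>y. y \<noteq> 0 \<and> x * y = scale l y}" if non_unit: "x + scale s 1 \<notin> ring_units" for s
  proof -
    obtain y where y: "(x + scale s 1) * y = 0" "y \<noteq> 0"
      using unit_if_mult_left_inj[of "x + scale s 1"] non_unit by blast
    have "x * y = - (scale s 1 * y)"
      using y(1) by (simp add: distrib_right add_eq_0_iff2)
    also have "\<dots> = scale (- s) y"
      by (simp flip: scale_eq_mult)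
    finally show ?thesis
      using y(2) by (intro image_eqI[of _ _ "- s"]) auto
  qed
  then have "{s. x + scale s 1 \<notin> ring_units} \<subseteq> uminus ` {l. \<exists>y. y \<noteq> 0 \<and> x * y = scale l y}"
    by blast
  moreover have "finite (uminus ` {l. \<exists>y. y \<noteq> 0 \<and> x * y = scale l y})"
    using finite_eigenvalues by blast
  ultimately show ?thesis
    by (rule finite_subset)
qed

end

lemma polyfun_on_line:
  fixes scale :: "'f::field \<Rightarrow> 'r::ring_1 \<Rightarrow> 'r"
  assumes "p \<in> polyfun scale"
  shows "\<exists>P. \<forall>s. p (a + scale s b) = poly P s"
  using assms
proof (induction rule: polyfun.induct)
  case (const c)
  show ?case
    by (rule exI[of _ "[:c:]"]) simp
next
  case (lin \<phi>)
  then have "\<phi> (a + scale s b) = \<phi> a + s * \<phi> b" for s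
    by (simp add: Vector_Spaces.linear_iff)
  then show ?case
    by (intro exI[of _ "[:\<phi> a, \<phi> b:]"]) (simp add: mult.commute)
next
  case (add p q)
  then obtain P Q where "\<forall>s. p (a + scale s b) = poly P s" "\<forall>s. q (a + scale s b) = poly Q s"
    by blast
  then show ?case
    by (intro exI[of _ "P + Q"]) simp
next
  case (mult p q)
  then obtain P Q where "\<forall>s. p (a + scale s b) = poly P s" "\<forall>s. q (a + scale s b) = poly Q s"
    by blast
  then show ?case
    by (intro exI[of _ "P * Q"]) simp
qed

lemma polyfun_translate:
  fixes scale :: "'f::field \<Rightarrow> 'r::ring_1 \<Rightarrow> 'r"
  assumes "p \<in> polyfun scale"
  shows "(\<lambda>x. p (x + c)) \<in> polyfun scale"
  using assms
proof (induction rule: polyfun.induct)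
  case (lin \<phi>)
  then have "(\<lambda>x. \<phi> (x + c)) = (\<lambda>x. \<phi> x + (\<lambda>_. \<phi> c) x)"
    by (simp add: Vector_Spaces.linear_iff)
  then show ?case
    using polyfun.add[OF polyfun.lin[OF lin] polyfun.const] by simp
qed (auto intro: polyfun.intros)

lemma poly_eq_0_if_zero_off_finite:
  fixes P :: "'f::field poly"
  assumes "infinite (UNIV :: 'f set)" and "finite E" and "\<And>s. s \<notin> E \<Longrightarrow> poly P s = 0"
  shows "P = 0"
proof (rule ccontr)
  assume "P \<noteq> 0"
  then have "finite (E \<union> {s. poly P s = 0})"
    using assms(2) poly_roots_finite by blast
  moreover have "E \<union> {s. poly P s = 0} = UNIV"
    using assms(3) by blast
  ultimately show False
    using assms(1) by simp
qed

lemma poly_const_if_mult_reflect_eq_1: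
  fixes h :: "'f::field poly"
  assumes "infinite (UNIV :: 'f set)" and "\<And>s. poly h s * poly h (- s) = 1"
  shows "poly h s = poly h 0"
proof -
  have "h * pcompose h [:0, -1:] - 1 = 0"
    by (rule poly_eq_0_if_zero_off_finite[OF assms(1) finite.emptyI])
      (simp add: poly_pcompose assms(2))
  then have "h dvd 1"
    by (metis dvdI eq_iff_diff_eq_0)
  then obtain c where "h = [:c:]"
    using is_unit_poly_iff by blast
  then show ?thesis
    by simp
qed

lemma multiplicative_one:
  assumes "multiplicative f" and "f \<noteq> (\<lambda>_. 0)"
  shows "f 1 = 1"
proof -
  obtain z where "f z \<noteq> 0"
    using assms(2) by auto
  moreover have "f z = f 1 * f z"
    using assms(1) unfolding multiplicative_def by (metis mult_1_left)
  ultimately show ?thesis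
    by simp
qed

lemma multiplicative_unit_nonzero:
  assumes "multiplicative f" and "f 1 = 1" and "u \<in> ring_units"
  shows "f u \<noteq> 0"
proof -
  obtain v where "u * v = 1"
    using assms(3) unfolding ring_units_def by blast
  then have "f u * f v = 1"
    using assms(1,2) unfolding multiplicative_def by metis
  then show ?thesis
    by auto
qed

context finite_dimensional_algebra
begin

lemma polyfun_eq_if_eq_on_units:
  assumes "infinite (UNIV :: 'f set)"
    and "p \<in> polyfun scale" and "q \<in> polyfun scale"
    and "\<And>u. u \<in> ring_units \<Longrightarrow> p u = q u"
  shows "p = q"
proof
  fix x
  obtain P where P: "\<forall>s. p (x + scale s 1) = poly P s"
    using polyfun_on_line[OF assms(2)] by blast
  obtain Q where Q: "\<forall>s. q (x + scale s 1) = poly Q s"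
    using polyfun_on_line[OF assms(3)] by blast
  have "P - Q = 0"
  proof (rule poly_eq_0_if_zero_off_finite[OF assms(1) finite_non_units_on_line])
    fix s
    assume "s \<notin> {s. x + scale s 1 \<notin> ring_units}"
    then have "p (x + scale s 1) = q (x + scale s 1)"
      using assms(4) by simp
    then show "poly (P - Q) s = 0"
      using P Q by simp
  qed
  then have "poly P 0 = poly Q 0"
    by simp
  then show "p x = q x"
    using P Q by (metis add_0_right scale_zero_left)
qed

lemma multiplicative_polyfun_one_plus_nilpotent:
  assumes "infinite (UNIV :: 'f set)"
    and "f \<in> polyfun scale" and "multiplicative f" and "f 1 = 1"
    and "x ^ k = 0"
  shows "f (1 + x) = 1"
proof -
  have "f (1 + x) = 1" if "x ^ (2 ^ n) = 0" for n and x :: 'r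
    using that
  proof (induction n arbitrary: x)
    case 0
    then show ?case
      using assms(4) by simp
  next
    case (Suc n)
    obtain h where h: "\<forall>s. f (1 + scale s x) = poly h s"
      using polyfun_on_line[OF assms(2)] by blast
    have "poly h s * poly h (- s) = 1" for s
    proof -
      define a where "a = scale s x"
      have "(a * a) ^ (2 ^ n) = a ^ (2 ^ Suc n)"
        by (simp add: power_mult power2_eq_square)
      also have "\<dots> = 0"
        using Suc.prems by (simp add: a_def power_scale)
      finally have "(- (a * a)) ^ (2 ^ n) = 0"
        by (simp add: power_minus[of "a * a"])
      then have "f (1 + - (a * a)) = 1"
        by (rule Suc.IH)
      have "poly h s * poly h (- s) = f (1 + a) * f (1 + scale (- s) x)"
        by (simp only: a_def h)
      also have "\<dots> = f ((1 + a) * (1 + scale (- s) x))"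
        using assms(3) unfolding multiplicative_def by simp
      also have "(1 + a) * (1 + scale (- s) x) = 1 + - (a * a)"
        by (simp add: a_def algebra_simps)
      finally show ?thesis
        using \<open>f (1 + - (a * a)) = 1\<close> by simp
    qed
    then have "poly h 1 = poly h 0"
      by (rule poly_const_if_mult_reflect_eq_1[OF assms(1)])
    moreover have "f (1 + x) = poly h 1" and "poly h 0 = f 1"
      using h[rule_format, of 1] h[rule_format, of 0] by simp_all
    ultimately show ?case
      using assms(4) by simp
  qed
  moreover have "x ^ (2 ^ k) = x ^ k * x ^ (2 ^ k - k)"
    by (simp add: less_exp less_imp_le flip: power_add)
  then have "x ^ (2 ^ k) = 0"
    using assms(5) by simp
  ultimately show ?thesis
    by blast
qed

lemma multiplicative_polyfun_jacobson_invariant: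
  assumes "infinite (UNIV :: 'f set)"
    and "f \<in> polyfun scale" and "multiplicative f" and "f 1 = 1"
    and "j \<in> jacobson"
  shows "f (x + j) = f x"
proof -
  have "(\<lambda>x. f (x + j)) = f"
  proof (rule polyfun_eq_if_eq_on_units[OF assms(1) polyfun_translate[OF assms(2)] assms(2)])
    fix u :: 'r
    assume "u \<in> ring_units"
    then obtain v where "u * v = 1"
      unfolding ring_units_def by blast
    then have "u + j = u * (1 + v * j)"
      by (simp add: distrib_left mult.assoc[symmetric])
    moreover have "f (1 + v * j) = 1"
      using jacobson_nilpotent[OF jacobson_mult_left[OF assms(5)]]
        multiplicative_polyfun_one_plus_nilpotent[OF assms(1-4)] by blast
    ultimately show "f (u + j) = f u"
      using assms(3) unfolding multiplicative_def by simp
  qed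
  then show ?thesis
    by metis
qed

end

theorem lemma3p1:
  fixes scale :: "'f::field \<Rightarrow> 'r::ring_1 \<Rightarrow> 'r"
    and f :: "'r \<Rightarrow> 'f"
  assumes "infinite (UNIV :: 'f set)"
    and "fin_dim_algebra scale"
    and "f \<in> polyfun scale" and "multiplicative f" and "f \<noteq> (\<lambda>_. 0)"
  shows "(\<forall>u\<in>ring_units. f u \<noteq> 0)
       \<and> (\<forall>u\<in>ring_units. \<forall>v\<in>ring_units. f (u * v) = f u * f v)
       \<and> (\<forall>j\<in>jacobson. f (1 + j) = 1)
       \<and> (\<exists>g. g \<in> polyfun scale
              \<and> (\<forall>x. \<forall>j\<in>jacobson. g (x + j) = g x)
              \<and> (\<forall>u\<in>ring_units. \<forall>v\<in>ring_units. g (u * v) = g u * g v)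
              \<and> (\<forall>u\<in>ring_units. f u = g u))
       \<and> (\<forall>f'. f' \<in> polyfun scale \<and> multiplicative f' \<and> (\<forall>u\<in>ring_units. f' u = f u)
              \<longrightarrow> f' = f)"
proof -
  obtain Basis where "finite_dimensional_algebra scale Basis"
    using fin_dim_algebra_obtains_basis[OF assms(2)] .
  then interpret finite_dimensional_algebra scale Basis .
  have f1: "f 1 = 1"
    using assms(4,5) by (rule multiplicative_one)
  have "\<forall>j\<in>jacobson. f (1 + j) = 1"
    using jacobson_nilpotent multiplicative_polyfun_one_plus_nilpotent[OF assms(1,3,4) f1] by blast
  moreover have "\<forall>x. \<forall>j\<in>jacobson. f (x + j) = f x"
    using multiplicative_polyfun_jacobson_invariant[OF assms(1,3,4) f1] by blast
  moreover have "\<forall>f'. f' \<in> polyfun scale \<and> multiplicative f' \<and> (\<forall>u\<in>ring_units. f' u = f u)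
                  \<longrightarrow> f' = f"
    using polyfun_eq_if_eq_on_units[OF assms(1) _ assms(3)] by blast
  ultimately show ?thesis
    using assms(3,4) f1 multiplicative_unit_nonzero unfolding multiplicative_def by blast
qed

end
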